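(* Let $q$ be an odd prime power and $m\geq 2$. Then the largest odd coset leader modulo $q^m-1$ is $\delta_1=(q-1)q^{m-1}-1$.
   Context: For $0\leq i\leq q^m-2$, the $q$-cyclotomic coset of $i$ modulo $q^m-1$ is $\{i,iq,iq^2,\ldots\}\bmod (q^m-1)$, and its smallest element is its coset leader. An odd coset leader is a coset leader that is an odd integer. *)

theory Defs
  imports "HOL-Computational_Algebra.Primes"
begin

definition cyc_coset :: "nat \<Rightarrow> nat \<Rightarrow> nat \<Rightarrow> nat set" where
  "cyc_coset q m i = {(i * q ^ j) mod (q ^ m - 1) | j. True}"

definition coset_leader :: "nat \<Rightarrow> nat \<Rightarrow> nat \<Rightarrow> bool" where
  "coset_leader q m i \<longleftrightarrow> i \<le> q ^ m - 2 \<and> i = Min (cyc_coset q m i)"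

definition odd_coset_leaders :: "nat \<Rightarrow> nat \<Rightarrow> nat set" where
  "odd_coset_leaders q m = {i. coset_leader q m i \<and> odd i}"

end

theory Submission
  imports Defs "HOL-Number_Theory.Cong"
begin

text \<open>
  Let \<open>n = q^m - 1\<close> and \<open>t = q^(m-1)\<close>. If \<open>i + y = n\<close>, then \<open>i q^j \<equiv> -y q^j (mod n)\<close>, so
  as long as \<open>y q^j\<close> is not divisible by \<open>n\<close> the coset of \<open>i\<close> is the reflection
  \<open>x \<mapsto> n - x\<close> of the coset of \<open>y\<close>. The coset of \<open>t\<close> consists of the powers
  \<open>1, q, \<dots>, q^(m-1)\<close>, whose maximum is \<open>t\<close>; hence \<open>n - t\<close> is a coset leader. Conversely,
  if \<open>i > n - t\<close> then \<open>0 < y < t\<close>, and the first \<open>y q^s\<close> that reaches \<open>t\<close> is still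
  below \<open>n\<close>, so \<open>i q^s mod n = n - y q^s \<le> n - t < i\<close> and \<open>i\<close> is no leader.
  Finally \<open>n - t = (q-1) q^(m-1) - 1\<close> is odd when \<open>q\<close> is odd.
\<close>

lemma finite_cyc_coset:
  assumes "0 < q ^ m - 1"
  shows "finite (cyc_coset q m i)"
proof (rule finite_subset)
  show "cyc_coset q m i \<subseteq> {..<q ^ m - 1}"
    using assms unfolding cyc_coset_def by auto
qed simp

lemma coset_leader_iff:
  assumes "0 < q ^ m - 1"
  shows "coset_leader q m i \<longleftrightarrow> i < q ^ m - 1 \<and> (\<forall>j. i \<le> i * q ^ j mod (q ^ m - 1))"
proof
  assume "coset_leader q m i"
  then have "i < q ^ m - 1" and leader: "i = Min (cyc_coset q m i)"
    using assms unfolding coset_leader_def by auto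
  moreover have "i \<le> i * q ^ j mod (q ^ m - 1)" for j
  proof -
    have "i * q ^ j mod (q ^ m - 1) \<in> cyc_coset q m i"
      unfolding cyc_coset_def by blast
    then show ?thesis
      using leader finite_cyc_coset[OF assms] by (metis Min_le)
  qed
  ultimately show "i < q ^ m - 1 \<and> (\<forall>j. i \<le> i * q ^ j mod (q ^ m - 1))"
    by blast
next
  assume i: "i < q ^ m - 1 \<and> (\<forall>j. i \<le> i * q ^ j mod (q ^ m - 1))"
  have "i \<in> cyc_coset q m i"
    using i unfolding cyc_coset_def by (auto intro!: exI[of _ 0])
  moreover have "i \<le> x" if "x \<in> cyc_coset q m i" for x
    using that i unfolding cyc_coset_def by auto
  ultimately have "i = Min (cyc_coset q m i)"
    using finite_cyc_coset[OF assms] by (intro Min_eqI[symmetric]) auto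
  then show "coset_leader q m i"
    using i unfolding coset_leader_def by auto
qed

lemma mult_mod_complement:
  fixes i y c n :: nat
  assumes "i + y = n" and "y * c mod n \<noteq> 0"
  shows "i * c mod n = n - y * c mod n"
proof -
  have "0 < n"
    using assms by (cases n) auto
  have "(i * c mod n + y * c mod n) mod n = 0"
    using assms(1) by (metis add_mult_distrib mod_add_eq mod_mult_self1_is_0)
  then obtain k where k: "i * c mod n + y * c mod n = n * k"
    by blast
  have "n * k < n * 2"
    using k \<open>0 < n\<close> by (metis mod_less_divisor add_strict_mono mult_2_right)
  moreover have "k \<noteq> 0"
    using k assms(2) by (metis add_is_0 mult_0_right)
  ultimately have "k = 1"
    by simp
  then show ?thesis
    using k by simp
qed

lemma power_mod_pred_power:
  fixes q m k :: nat
  assumes "0 < q"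
  shows "q ^ k mod (q ^ m - 1) = q ^ (k mod m) mod (q ^ m - 1)"
proof -
  define n where "n = q ^ m - 1"
  have "q ^ m = n + 1"
    using assms unfolding n_def by simp
  then have "[q ^ m = 1] (mod n)"
    unfolding cong_def by (simp only: add.commute[of n 1] mod_add_self2)
  then have "[(q ^ m) ^ (k div m) * q ^ (k mod m) = 1 ^ (k div m) * q ^ (k mod m)] (mod n)"
    by (intro cong_mult cong_pow cong_refl)
  then show ?thesis
    unfolding n_def cong_def by (simp flip: power_add power_mult)
qed

lemma top_power_less_pred_power:
  fixes q m :: nat
  assumes "2 \<le> q" and "2 \<le> m"
  shows "q ^ (m - 1) < q ^ m - 1"
proof -
  have "q ^ m = q * q ^ (m - 1)"
    using assms(2) by (simp flip: power_Suc)
  moreover have "q \<le> q ^ (m - 1)"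
    using assms by (intro self_le_power) auto
  moreover have "2 * q ^ (m - 1) \<le> q * q ^ (m - 1)"
    using assms(1) by (rule mult_le_mono1)
  ultimately show ?thesis
    using assms(1) by linarith
qed

lemma power_mod_pred_power_bounds:
  fixes q m k :: nat
  assumes "2 \<le> q" and "2 \<le> m"
  shows "0 < q ^ k mod (q ^ m - 1)" and "q ^ k mod (q ^ m - 1) \<le> q ^ (m - 1)"
proof -
  have "k mod m \<le> m - 1"
    using mod_less_divisor[of m k] assms(2) by linarith
  then have "q ^ (k mod m) \<le> q ^ (m - 1)"
    using assms(1) by (intro power_increasing) auto
  moreover from this have "q ^ (k mod m) < q ^ m - 1"
    using top_power_less_pred_power[OF assms] by linarith
  then have "q ^ k mod (q ^ m - 1) = q ^ (k mod m)"
    using power_mod_pred_power[of q k m] assms(1) by simp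
  ultimately show "0 < q ^ k mod (q ^ m - 1)" and "q ^ k mod (q ^ m - 1) \<le> q ^ (m - 1)"
    using assms(1) by simp_all
qed

lemma ex_power_mult_between:
  fixes q y b :: nat
  assumes "1 < q" and "0 < y" and "y < b"
  obtains s where "y * q ^ s < b" and "b \<le> y * q ^ Suc s"
proof -
  have "b < 2 ^ b"
    by (rule less_exp)
  also have "\<dots> \<le> q ^ b"
    using assms(1) by (simp add: power_mono)
  also have "\<dots> \<le> y * q ^ b"
    using assms(2) by simp
  finally have "b \<le> y * q ^ b"
    by simp
  then obtain s where "\<not> b \<le> y * q ^ s" and "b \<le> y * q ^ Suc s"
    using ex_least_nat_less[of "\<lambda>s. b \<le> y * q ^ s" b] assms(3) by auto
  then show ?thesis
    using that by (meson not_le)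
qed

lemma coset_leader_compl_top_power:
  fixes q m :: nat
  assumes "2 \<le> q" and "2 \<le> m"
  shows "coset_leader q m (q ^ m - 1 - q ^ (m - 1))"
proof -
  define n where "n = q ^ m - 1"
  define d where "d = n - q ^ (m - 1)"
  have top_less: "q ^ (m - 1) < n"
    unfolding n_def using top_power_less_pred_power[OF assms] .
  have "0 < q ^ (m - 1)"
    using assms(1) by simp
  then have "d < n" and compl: "d + q ^ (m - 1) = n"
    using top_less unfolding d_def by auto
  have "d \<le> d * q ^ j mod n" for j
  proof -
    have "q ^ (m - 1) * q ^ j = q ^ (m - 1 + j)"
      by (simp add: power_add)
    then have "0 < q ^ (m - 1) * q ^ j mod n" and "q ^ (m - 1) * q ^ j mod n \<le> q ^ (m - 1)"
      using power_mod_pred_power_bounds[OF assms] unfolding n_def by simp_all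
    moreover have "d * q ^ j mod n = n - q ^ (m - 1) * q ^ j mod n"
      using mult_mod_complement[OF compl] calculation(1) by simp
    ultimately show ?thesis
      unfolding d_def by (simp add: diff_le_mono2)
  qed
  then show ?thesis
    using coset_leader_iff[of q m d] top_less \<open>d < n\<close> unfolding n_def d_def by simp
qed

lemma coset_leader_le_compl_top_power:
  fixes q m i :: nat
  assumes "2 \<le> q" and "0 < m" and "coset_leader q m i"
  shows "i \<le> q ^ m - 1 - q ^ (m - 1)"
proof (rule ccontr)
  define n where "n = q ^ m - 1"
  define t where "t = q ^ (m - 1)"
  have qt: "q ^ m = q * t"
    using assms(2) unfolding t_def by (simp flip: power_Suc)
  have "1 < q ^ m"
    using assms(1,2) by (intro one_less_power) auto
  then have "0 < n"
    unfolding n_def by simp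
  then have "i < n" and minimal: "\<And>j. i \<le> i * q ^ j mod n"
    using assms(3) coset_leader_iff[of q m i] unfolding n_def by auto
  assume "\<not> i \<le> q ^ m - 1 - q ^ (m - 1)"
  then have "n - t < i"
    unfolding n_def t_def by simp
  define y where "y = n - i"
  have "0 < y" and "y < t" and compl: "i + y = n"
    using \<open>i < n\<close> \<open>n - t < i\<close> unfolding y_def by auto
  then obtain s where low: "y * q ^ s < t" and high: "t \<le> y * q ^ Suc s"
    using ex_power_mult_between[of q y t] assms(1) by auto
  have "y * q ^ s \<le> t - 1"
    using low by linarith
  have "y * q ^ Suc s = q * (y * q ^ s)"
    by simp
  also have "\<dots> \<le> q * (t - 1)"
    using \<open>y * q ^ s \<le> t - 1\<close> by (rule mult_le_mono2)
  also have "\<dots> = q * t - q"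
    by (simp add: diff_mult_distrib2)
  finally have "y * q ^ Suc s \<le> q * t - q" .
  moreover have "q \<le> q * t"
    using \<open>y < t\<close> by simp
  ultimately have "y * q ^ Suc s < n"
    using assms(1) qt unfolding n_def by linarith
  moreover have "0 < y * q ^ Suc s"
    using \<open>0 < y\<close> assms(1) by simp
  ultimately have "i * q ^ Suc s mod n = n - y * q ^ Suc s"
    using mult_mod_complement[OF compl] by simp
  also have "\<dots> < i"
    using high \<open>n - t < i\<close> by linarith
  finally show False
    using minimal[of "Suc s"] by simp
qed

theorem lemma16:
  fixes q m :: nat
  assumes "\<exists>p k. prime p \<and> k \<ge> 1 \<and> q = p ^ k"
    and "odd q"
    and "m \<ge> 2"
  shows "(q - 1) * q ^ (m - 1) - 1 \<in> odd_coset_leaders q m \<and> (\<forall>i \<in> odd_coset_leaders q m. i \<le> (q - 1) * q ^ (m - 1) - 1)"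
proof -
  obtain p k where "prime p" and "k \<ge> 1" and "q = p ^ k"
    using assms(1) by blast
  then have "1 < p ^ k"
    by (intro one_less_power prime_gt_1_nat) auto
  then have "2 \<le> q"
    using \<open>q = p ^ k\<close> by simp
  have "q ^ m = q * q ^ (m - 1)"
    using assms(3) by (simp flip: power_Suc)
  then have delta: "(q - 1) * q ^ (m - 1) - 1 = q ^ m - 1 - q ^ (m - 1)"
    by (simp add: diff_mult_distrib)
  have "3 \<le> q"
    using \<open>2 \<le> q\<close> assms(2) by presburger
  then have "odd ((q - 1) * q ^ (m - 1) - 1)"
    using assms(2) by (simp add: even_diff_nat)
  then show ?thesis
    using coset_leader_compl_top_power[OF \<open>2 \<le> q\<close> assms(3)]
      coset_leader_le_compl_top_power[OF \<open>2 \<le> q\<close>] assms(3)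
    unfolding odd_coset_leaders_def delta by auto
qed

end
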